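(* Let $\mathcal{G}$, $\mathcal{S}$, $\mathcal{C}$, $\mu$ be as in the context and let $\mathcal{K}$ be a cover of $\mathcal{C}$. For each dichotomy $(i,b,J,u_1,u_2)$ let $X^{i,u_1,u_2}_{b,J}:=\mu_i^{s}-\mu_i^{s'}$, where $(s,s')$ is an $(i,b,J,u_1,u_2)$-pair contained in $\mathcal{K}$. Then for any state $s\in\mathcal{S}$ and any $i\in[k]$ with $s(i)=b$, and any $s''\in\mathcal{K}$ with $s''(i)=b$, $$\mu_i^s=\mu_i^{s''}+\sum_{J\in I_i}X^{i,s(J),s''(J)}_{b,J}.$$
   Context: $\mathcal{G}=(V,E)$ is an undirected graph on $V=\{v_1,\dots,v_k\}$; $\mathcal{S}=\{s\in\{0,1\}^k:\{v_i:s(i)=1\}$ is independent in $\mathcal{G}\}$. Correlation sets $\mathcal{C}=\{C_1,\dots,C_n\}$ are subsets of $[k]$ of size at most $m$; for each $s\in\mathcal{S}$ and $j\in[n]$ there is $\theta_j^s\ge0$ depending only on $s$ restricted to $C_j$, and $\mu_i^s=\sum_j\theta_j^s\mathbf{1}(i\in C_j)$. Two vertices share a correlation set if they lie together in some set of $\mathcal{C}$. For each $i$, $I_i$ is a partition of the set of indices $j\neq i$ that share a correlation set with $i$ into disjoint subsets such that no two vertices in different subsets share a correlation set. For $J\subseteq[k]$, $s(J)\in\{0,1\}^J$ is $s$ restricted to $J$. For $J\in I_i$, $b\in\{0,1\}$, $u_1,u_2\in\{0,1\}^J$, $(i,b,J,u_1,u_2)$ is a dichotomy if there exist $s,s'\in\mathcal{S}$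 with $s(J)=u_1$, $s'(J)=u_2$, $s(i)=s'(i)=b$, and $s,s'$ agreeing on all coordinates outside $J\cup\{i\}$; such a pair is an $(i,b,J,u_1,u_2)$-pair. A set $\mathcal{K}\subseteq\mathcal{S}$ is a cover of $\mathcal{C}$ if for every dichotomy $(i,b,J,u_1,u_2)$ it contains an $(i,b,J,u_1,u_2)$-pair. *)

theory Defs
  imports Complex_Main "HOL-Library.FuncSet"
begin

definition simple_graph :: "nat \<Rightarrow> nat set set \<Rightarrow> bool" where
  "simple_graph k E \<longleftrightarrow> (\<forall>e\<in>E. \<exists>a b. e = {a, b} \<and> a \<noteq> b \<and> a \<in> {1..k} \<and> b \<in> {1..k})"

definition states :: "nat \<Rightarrow> nat set set \<Rightarrow> (nat \<Rightarrow> nat) set" where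
  "states k E = {s. s \<in> {1..k} \<rightarrow>\<^sub>E {0, 1} \<and>
      (\<forall>a b. {a, b} \<in> E \<longrightarrow> \<not> (s a = 1 \<and> s b = 1))}"

abbreviation restr :: "(nat \<Rightarrow> nat) \<Rightarrow> nat set \<Rightarrow> (nat \<Rightarrow> nat)" where
  "restr s J \<equiv> restrict s J"

definition mu :: "nat \<Rightarrow> (nat \<Rightarrow> nat set) \<Rightarrow> ((nat \<Rightarrow> nat) \<Rightarrow> nat \<Rightarrow> real)
                   \<Rightarrow> nat \<Rightarrow> (nat \<Rightarrow> nat) \<Rightarrow> real" where
  "mu n C \<theta> i s = (\<Sum>j\<in>{1..n}. \<theta> s j * (if i \<in> C j then 1 else 0))"

definition share :: "nat \<Rightarrow> (nat \<Rightarrow> nat set) \<Rightarrow> nat \<Rightarrow> nat \<Rightarrow> bool" where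
  "share n C a b \<longleftrightarrow> (\<exists>l\<in>{1..n}. a \<in> C l \<and> b \<in> C l)"

definition nbrs :: "nat \<Rightarrow> nat \<Rightarrow> (nat \<Rightarrow> nat set) \<Rightarrow> nat \<Rightarrow> nat set" where
  "nbrs k n C i = {j \<in> {1..k}. j \<noteq> i \<and> share n C i j}"

definition valid_I :: "nat \<Rightarrow> nat \<Rightarrow> (nat \<Rightarrow> nat set) \<Rightarrow> nat \<Rightarrow> nat set set \<Rightarrow> bool" where
  "valid_I k n C i P \<longleftrightarrow>
     \<Union>P = nbrs k n C i \<and> (\<forall>J\<in>P. J \<noteq> {}) \<and>
     (\<forall>J\<in>P. \<forall>J'\<in>P. J \<noteq> J' \<longrightarrow> J \<inter> J' = {}) \<and>
     (\<forall>J\<in>P. \<forall>J'\<in>P. J \<noteq> J' \<longrightarrow> (\<forall>a\<in>J. \<forall>a'\<in>J'. \<not> share n C a a'))"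

definition is_pair :: "nat \<Rightarrow> nat set set \<Rightarrow> nat \<Rightarrow> nat \<Rightarrow> nat set \<Rightarrow> (nat \<Rightarrow> nat)
     \<Rightarrow> (nat \<Rightarrow> nat) \<Rightarrow> (nat \<Rightarrow> nat) \<Rightarrow> (nat \<Rightarrow> nat) \<Rightarrow> bool" where
  "is_pair k E i b J u1 u2 s s' \<longleftrightarrow>
     s \<in> states k E \<and> s' \<in> states k E \<and> restr s J = u1 \<and> restr s' J = u2 \<and>
     s i = b \<and> s' i = b \<and> (\<forall>x\<in>{1..k} - (J \<union> {i}). s x = s' x)"

definition dichotomy :: "nat \<Rightarrow> nat set set \<Rightarrow> (nat \<Rightarrow> nat set set) \<Rightarrow> nat \<Rightarrow> nat \<Rightarrow> nat set
     \<Rightarrow> (nat \<Rightarrow> nat) \<Rightarrow> (nat \<Rightarrow> nat) \<Rightarrow> bool" where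
  "dichotomy k E I i b J u1 u2 \<longleftrightarrow>
     i \<in> {1..k} \<and> J \<in> I i \<and> b \<in> {0, 1} \<and> u1 \<in> J \<rightarrow>\<^sub>E {0, 1} \<and> u2 \<in> J \<rightarrow>\<^sub>E {0, 1} \<and>
     (\<exists>s s'. is_pair k E i b J u1 u2 s s')"

definition is_cover :: "nat \<Rightarrow> nat set set \<Rightarrow> (nat \<Rightarrow> nat set set) \<Rightarrow> (nat \<Rightarrow> nat) set \<Rightarrow> bool" where
  "is_cover k E I K \<longleftrightarrow> K \<subseteq> states k E \<and>
     (\<forall>i b J u1 u2. dichotomy k E I i b J u1 u2 \<longrightarrow>
        (\<exists>s\<in>K. \<exists>s'\<in>K. is_pair k E i b J u1 u2 s s'))"

end

theory Submission
  imports Defs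
begin

text \<open>Put c_j = \<theta>_j(s) - \<theta>_j(s''). Then \<mu>_i(s) - \<mu>_i(s'') is the sum of the c_j over the
  correlation sets C_j containing i. Such a C_j is either {i}, and then c_j = 0 because s and s''
  agree at i, or it meets exactly one block J of I_i and lies inside J \<union> {i}. The pair (t, t')
  chosen for J agrees outside J and coincides with s resp. s'' on J \<union> {i}, so by locality of \<theta>
  the difference \<theta>_j(t) - \<theta>_j(t') is c_j if C_j meets J and 0 otherwise. Summing over the blocks
  therefore counts every c_j exactly once.\<close>

lemma states_clear_outside:
  assumes "s \<in> states k E"
  shows "(\<lambda>x. if x \<in> {1..k} - A then 0 else s x) \<in> states k E"
  using assms unfolding states_def by (auto simp: PiE_iff extensional_def)

lemma is_pair_swap:
  "is_pair k E i b J u1 u2 t t' \<Longrightarrow> is_pair k E i b J u2 u1 t' t"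
  unfolding is_pair_def by auto

lemma is_pair_agree_off_block:
  assumes "is_pair k E i b J u1 u2 t t'" and "x \<in> {1..k} - J"
  shows "t x = t' x"
  using assms unfolding is_pair_def by (cases "x = i") auto

lemma is_pair_agree_on_block:
  assumes "is_pair k E i b J (restr s J) u2 t t'" and "s i = b" and "x \<in> J \<union> {i}"
  shows "t x = s x"
  using assms unfolding is_pair_def by (metis Un_iff restrict_apply' singletonD)

lemma dichotomy_of_states:
  assumes "i \<in> {1..k}" "J \<in> I i" "J \<subseteq> {1..k}"
    and "s \<in> states k E" "s' \<in> states k E" "s i = b" "s' i = b"
  shows "dichotomy k E I i b J (restr s J) (restr s' J)"
proof -
  \<comment> \<open>independent sets are closed under subsets, so clearing both states off \<open>J \<union> {i}\<close>
    produces a pair\<close>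
  define clear :: "(nat \<Rightarrow> nat) \<Rightarrow> nat \<Rightarrow> nat"
    where "clear t x = (if x \<in> {1..k} - (J \<union> {i}) then 0 else t x)" for t x
  have "is_pair k E i b J (restr s J) (restr s' J) (clear s) (clear s')"
    using assms states_clear_outside[of _ k E "J \<union> {i}"]
    unfolding is_pair_def clear_def by (auto intro!: restrict_ext)
  moreover have "restr t J \<in> J \<rightarrow>\<^sub>E {0, 1}" if "t \<in> states k E" for t
    using that \<open>J \<subseteq> {1..k}\<close> unfolding states_def by (auto simp: PiE_iff)
  moreover have "b \<in> {0, 1}"
    using assms(1,4,6) unfolding states_def by (auto simp: PiE_iff)
  ultimately show ?thesis
    using assms unfolding dichotomy_def by blast
qed

lemma valid_I_block_subset:
  assumes "valid_I k n C i P" "J \<in> P"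
  shows "J \<subseteq> {1..k} - {i}"
  using assms unfolding valid_I_def nbrs_def by auto

lemma valid_I_finite:
  assumes "valid_I k n C i P"
  shows "finite P"
proof (rule finite_subset)
  show "P \<subseteq> Pow ({1..k} - {i})"
    using valid_I_block_subset[OF assms] by blast
qed simp

lemma valid_I_block_unique:
  assumes "valid_I k n C i P" "l \<in> {1..n}" "J \<in> P" "J' \<in> P"
    and "C l \<inter> J \<noteq> {}" "C l \<inter> J' \<noteq> {}"
  shows "J = J'"
proof (rule ccontr)
  assume "J \<noteq> J'"
  obtain a a' where a: "a \<in> C l" "a \<in> J" and a': "a' \<in> C l" "a' \<in> J'"
    using assms(5,6) by blast
  have "share n C a a'"
    using assms(2) a(1) a'(1) unfolding share_def by blast
  moreover have "\<forall>J\<in>P. \<forall>J'\<in>P. J \<noteq> J' \<longrightarrow> (\<forall>a\<in>J. \<forall>a'\<in>J'. \<not> share n C a a')"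
    using assms(1) unfolding valid_I_def by (elim conjE)
  ultimately show False
    using assms(3,4) a(2) a'(2) \<open>J \<noteq> J'\<close> by blast
qed

lemma valid_I_covers_corr_set:
  assumes "valid_I k n C i P" "l \<in> {1..n}" "C l \<subseteq> {1..k}" "i \<in> C l"
  shows "C l - {i} \<subseteq> \<Union>P"
proof -
  have "C l - {i} \<subseteq> nbrs k n C i"
    using assms(2-4) unfolding nbrs_def share_def by blast
  moreover have "\<Union>P = nbrs k n C i"
    using assms(1) unfolding valid_I_def by (elim conjE)
  ultimately show ?thesis
    by simp
qed

lemma valid_I_corr_set_in_block:
  assumes "valid_I k n C i P" "l \<in> {1..n}" "C l \<subseteq> {1..k}" "i \<in> C l"
    and "J \<in> P" "C l \<inter> J \<noteq> {}"
  shows "C l \<subseteq> J \<union> {i}"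
proof
  fix x assume "x \<in> C l"
  show "x \<in> J \<union> {i}"
  proof (cases "x = i")
    case False
    then obtain J' where "J' \<in> P" "x \<in> J'"
      using valid_I_covers_corr_set[OF assms(1-4)] \<open>x \<in> C l\<close> by blast
    then have "J' = J"
      using valid_I_block_unique[OF assms(1,2)] assms(5,6) \<open>x \<in> C l\<close> by blast
    with \<open>x \<in> J'\<close> show ?thesis by simp
  qed simp
qed

lemma valid_I_unique_meeting_block:
  assumes "valid_I k n C i P" "l \<in> {1..n}" "C l \<subseteq> {1..k}" "i \<in> C l" "C l \<noteq> {i}"
  obtains J where "{J \<in> P. C l \<inter> J \<noteq> {}} = {J}"
proof -
  obtain x where "x \<in> C l - {i}"
    using assms(4,5) by blast
  then obtain J where "J \<in> P" "C l \<inter> J \<noteq> {}"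
    using valid_I_covers_corr_set[OF assms(1-4)] by blast
  then have "{J \<in> P. C l \<inter> J \<noteq> {}} = {J}"
    using valid_I_block_unique[OF assms(1,2)] by blast
  then show thesis by (rule that)
qed

lemma mu_diff:
  "mu n C \<theta> i t - mu n C \<theta> i t' = (\<Sum>l\<in>{l \<in> {1..n}. i \<in> C l}. \<theta> t l - \<theta> t' l)"
  unfolding mu_def sum_subtractf[symmetric] sum.inter_filter[OF finite_atLeastAtMost]
  by (rule sum.cong) simp_all

locale local_weights =
  fixes k n :: nat and E :: "nat set set" and C :: "nat \<Rightarrow> nat set"
    and \<theta> :: "(nat \<Rightarrow> nat) \<Rightarrow> nat \<Rightarrow> real"
  assumes corr_sets_in_range: "\<forall>l\<in>{1..n}. C l \<subseteq> {1..k}"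
    and weights_local: "\<forall>t\<in>states k E. \<forall>t'\<in>states k E. \<forall>l\<in>{1..n}.
                           restr t (C l) = restr t' (C l) \<longrightarrow> \<theta> t l = \<theta> t' l"
begin

lemma weight_cong:
  assumes "t \<in> states k E" "t' \<in> states k E" "l \<in> {1..n}" "\<And>x. x \<in> C l \<Longrightarrow> t x = t' x"
  shows "\<theta> t l = \<theta> t' l"
proof -
  have "restr t (C l) = restr t' (C l)"
    using assms(4) by (rule restrict_ext)
  then show ?thesis
    using weights_local assms(1-3) by blast
qed

lemma pair_weight_diff:
  assumes pair: "is_pair k E i b J (restr s J) (restr s' J) t t'"
    and "s \<in> states k E" "s' \<in> states k E" "s i = b" "s' i = b"
    and P: "valid_I k n C i P" "J \<in> P"
    and l: "l \<in> {1..n}" "i \<in> C l"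
  shows "\<theta> t l - \<theta> t' l = (if C l \<inter> J \<noteq> {} then \<theta> s l - \<theta> s' l else 0)"
proof -
  have states: "t \<in> states k E" "t' \<in> states k E"
    using pair unfolding is_pair_def by auto
  have C_l: "C l \<subseteq> {1..k}"
    using corr_sets_in_range l by blast
  show ?thesis
  proof (cases "C l \<inter> J = {}")
    case True
    then have "\<theta> t l = \<theta> t' l"
      using C_l is_pair_agree_off_block[OF pair] by (intro weight_cong[OF states l(1)]) blast
    with True show ?thesis by simp
  next
    case False
    then have "C l \<subseteq> J \<union> {i}"
      using valid_I_corr_set_in_block[OF P(1) l(1) C_l l(2) P(2)] by blast
    then have "\<theta> t l = \<theta> s l" "\<theta> t' l = \<theta> s' l"
      using assms is_pair_agree_on_block[OF pair] is_pair_agree_on_block[OF is_pair_swap[OF pair]]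
      by (auto intro!: weight_cong[OF _ _ l(1)] states)
    with False show ?thesis by simp
  qed
qed

theorem mu_block_decomposition:
  assumes "s \<in> states k E" "s' \<in> states k E" "s i = b" "s' i = b"
    and P: "valid_I k n C i P"
    and pairs: "\<And>J. J \<in> P \<Longrightarrow> is_pair k E i b J (restr s J) (restr s' J) (fst (p J)) (snd (p J))"
  shows "mu n C \<theta> i s = mu n C \<theta> i s' + (\<Sum>J\<in>P. mu n C \<theta> i (fst (p J)) - mu n C \<theta> i (snd (p J)))"
proof -
  define L where "L = {l \<in> {1..n}. i \<in> C l}"
  define c where "c l = \<theta> s l - \<theta> s' l" for l
  have blocks_once: "(\<Sum>J\<in>P. if C l \<inter> J \<noteq> {} then c l else 0) = c l" if "l \<in> L" for l
  proof (cases "C l = {i}")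
    case True
    then have "\<theta> s l = \<theta> s' l"
      using assms(1-4) that unfolding L_def by (intro weight_cong) auto
    then show ?thesis by (simp add: c_def cong: if_cong)
  next
    case False
    have l: "l \<in> {1..n}" "i \<in> C l"
      using that unfolding L_def by auto
    obtain J where "{J \<in> P. C l \<inter> J \<noteq> {}} = {J}"
      using valid_I_unique_meeting_block[OF P l(1) _ l(2) False] corr_sets_in_range l(1) by blast
    then show ?thesis
      using valid_I_finite[OF P] by (simp add: sum.inter_filter[symmetric])
  qed
  have "(\<Sum>J\<in>P. mu n C \<theta> i (fst (p J)) - mu n C \<theta> i (snd (p J)))
      = (\<Sum>J\<in>P. \<Sum>l\<in>L. if C l \<inter> J \<noteq> {} then c l else 0)"
  proof (rule sum.cong[OF refl])
    fix J assume J: "J \<in> P"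
    show "mu n C \<theta> i (fst (p J)) - mu n C \<theta> i (snd (p J))
        = (\<Sum>l\<in>L. if C l \<inter> J \<noteq> {} then c l else 0)"
      unfolding mu_diff L_def c_def
      by (rule sum.cong[OF refl]) (simp add: pair_weight_diff[OF pairs[OF J] assms(1-4) P J])
  qed
  also have "\<dots> = (\<Sum>l\<in>L. c l)"
    by (subst sum.swap) (simp add: blocks_once)
  also have "\<dots> = mu n C \<theta> i s - mu n C \<theta> i s'"
    unfolding mu_diff L_def c_def by simp
  finally show ?thesis by simp
qed

end

theorem theorem7:
  fixes k n m :: nat and E :: "nat set set" and C :: "nat \<Rightarrow> nat set"
    and \<theta> :: "(nat \<Rightarrow> nat) \<Rightarrow> nat \<Rightarrow> real" and I :: "nat \<Rightarrow> nat set set"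
    and K :: "(nat \<Rightarrow> nat) set"
    and pick :: "nat \<Rightarrow> nat \<Rightarrow> nat set \<Rightarrow> (nat \<Rightarrow> nat) \<Rightarrow> (nat \<Rightarrow> nat)
                 \<Rightarrow> (nat \<Rightarrow> nat) \<times> (nat \<Rightarrow> nat)"
    and s s'' :: "nat \<Rightarrow> nat" and i b :: nat
  assumes graph: "simple_graph k E"
    and C_sub: "\<forall>j\<in>{1..n}. C j \<subseteq> {1..k}"
    and C_card: "\<forall>j\<in>{1..n}. card (C j) \<le> m"
    and theta_nonneg: "\<forall>t\<in>states k E. \<forall>j\<in>{1..n}. \<theta> t j \<ge> 0"
    and theta_local: "\<forall>t\<in>states k E. \<forall>t'\<in>states k E. \<forall>j\<in>{1..n}.
                         restr t (C j) = restr t' (C j) \<longrightarrow> \<theta> t j = \<theta> t' j"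
    and I_valid: "\<forall>i'\<in>{1..k}. valid_I k n C i' (I i')"
    and cover: "is_cover k E I K"
    and pick: "\<forall>i' b' J u1 u2. dichotomy k E I i' b' J u1 u2 \<longrightarrow>
                  fst (pick i' b' J u1 u2) \<in> K \<and> snd (pick i' b' J u1 u2) \<in> K \<and>
                  is_pair k E i' b' J u1 u2 (fst (pick i' b' J u1 u2)) (snd (pick i' b' J u1 u2))"
    and s_state: "s \<in> states k E"
    and i_range: "i \<in> {1..k}"
    and s_i: "s i = b"
    and s''_K: "s'' \<in> K"
    and s''_i: "s'' i = b"
  shows "mu n C \<theta> i s =
           mu n C \<theta> i s'' +
           (\<Sum>J\<in>I i. mu n C \<theta> i (fst (pick i b J (restr s J) (restr s'' J)))
                     - mu n C \<theta> i (snd (pick i b J (restr s J) (restr s'' J))))"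
proof -
  interpret local_weights k n E C \<theta>
    using C_sub theta_local by unfold_locales
  have s''_state: "s'' \<in> states k E"
    using cover s''_K unfolding is_cover_def by blast
  have P: "valid_I k n C i (I i)"
    using I_valid i_range by blast
  have "dichotomy k E I i b J (restr s J) (restr s'' J)" if "J \<in> I i" for J
    using i_range that valid_I_block_subset[OF P that] s_state s''_state s_i s''_i
    by (intro dichotomy_of_states) auto
  then have pairs: "is_pair k E i b J (restr s J) (restr s'' J)
      (fst (pick i b J (restr s J) (restr s'' J))) (snd (pick i b J (restr s J) (restr s'' J)))"
    if "J \<in> I i" for J
    using pick that by blast
  show ?thesis
    by (rule mu_block_decomposition[OF s_state s''_state s_i s''_i P pairs])
qed

end
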